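(* Let $\Sigma$ be a finite alphabet and let $C \subseteq \Sigma^n$ be a code with $|C|\ge 2$ and minimum Levenshtein distance $d$. Let $t_\mathsf{I}$ and $t_\mathsf{D}$ be non-negative integers with $t_\mathsf{D} \leq n$ such that $N = n + t_\mathsf{I} - t_\mathsf{D}$ is a positive integer, let $v \in \Sigma^N$ be any word, and let $\ell = |B_\mathsf{L}(v, t_\mathsf{D}, t_\mathsf{I}) \cap C|$. If $$\frac{d}{2} > t_\mathsf{D} + \frac{t_\mathsf{I}(n-t_\mathsf{D})}{N},$$ then $$\ell \leq \frac{N(d/2 - t_\mathsf{D})}{N(d/2-t_\mathsf{D})-t_\mathsf{I}(n-t_\mathsf{D})}.$$
   Context: For words $x,y$ over $\Sigma$ (possibly of different lengths), the Levenshtein distance $d_\mathsf{L}(x,y)$ is the minimum number of single-symbol insertions and deletions needed to transform $x$ into $y$. The minimum Levenshtein distance of a code $C$ is $\min\{d_\mathsf{L}(c_1,c_2): c_1\neq c_2 \in C\}$. For a word $v$ and non-negative integers $a,b$, $B_\mathsf{L}(v,a,b)$ denotes the set of all words obtainable from $v$ by at most $a$ insertions and at most $b$ deletions. *)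

theory Defs
  imports Complex_Main
begin

definition ins_step :: "'a set \<Rightarrow> 'a list \<Rightarrow> 'a list \<Rightarrow> bool" where
  "ins_step \<Sigma> x y \<longleftrightarrow> (\<exists>u w a. a \<in> \<Sigma> \<and> x = u @ w \<and> y = u @ a # w)"

definition del_step :: "'a list \<Rightarrow> 'a list \<Rightarrow> bool" where
  "del_step x y \<longleftrightarrow> (\<exists>u w a. x = u @ a # w \<and> y = u @ w)"

inductive edits :: "'a set \<Rightarrow> 'a list \<Rightarrow> nat \<Rightarrow> nat \<Rightarrow> 'a list \<Rightarrow> bool" for \<Sigma> where
  refl: "edits \<Sigma> x 0 0 x"
| ins: "edits \<Sigma> x i j y \<Longrightarrow> ins_step \<Sigma> y z \<Longrightarrow> edits \<Sigma> x (Suc i) j z"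
| del: "edits \<Sigma> x i j y \<Longrightarrow> del_step y z \<Longrightarrow> edits \<Sigma> x i (Suc j) z"

definition lev_dist :: "'a set \<Rightarrow> 'a list \<Rightarrow> 'a list \<Rightarrow> nat" where
  "lev_dist \<Sigma> x y = (LEAST k. \<exists>i j. i + j = k \<and> edits \<Sigma> x i j y)"

definition lev_ball :: "'a set \<Rightarrow> 'a list \<Rightarrow> nat \<Rightarrow> nat \<Rightarrow> 'a list set" where
  "lev_ball \<Sigma> v a b = {y. \<exists>i j. i \<le> a \<and> j \<le> b \<and> edits \<Sigma> v i j y}"

definition min_lev_dist :: "'a set \<Rightarrow> 'a list set \<Rightarrow> nat" where
  "min_lev_dist \<Sigma> C = Min {lev_dist \<Sigma> c1 c2 | c1 c2. c1 \<in> C \<and> c2 \<in> C \<and> c1 \<noteq> c2}"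

end

theory Submission
  imports Defs "HOL-Library.Sublist" "HOL-Analysis.Convex"
begin

text \<open>A word c reachable from v (of length N) by at most tD insertions and tI deletions
  keeps a subsequence of v on some set S(c) of k = N - tI = n - tD positions of v. For two
  codewords c, c' in the ball, the positions in S(c) \<inter> S(c') carry a common subsequence of c
  and c', so d \<le> 2 (n - |S(c) \<inter> S(c')|). Thus the sets S(c) are \<ell> k-subsets of an N-set with
  pairwise intersections of size at most n - d/2, and Cauchy-Schwarz applied to the
  multiplicities of the N positions gives (\<ell> k)^2 \<le> N (\<ell> k + \<ell> (\<ell> - 1) (n - d/2)),
  which rearranges to the bound.\<close>

lemma edits_trans:
  "edits \<Sigma> y i' j' z \<Longrightarrow> edits \<Sigma> x i j y \<Longrightarrow> edits \<Sigma> x (i + i') (j + j') z"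
  by (induction rule: edits.induct) (simp_all add: edits.ins edits.del)

lemma edits_Cons: "edits \<Sigma> x i j y \<Longrightarrow> edits \<Sigma> (a # x) i j (a # y)"
proof (induction rule: edits.induct)
  case (refl x)
  show ?case by (rule edits.refl)
next
  case (ins x i j y z)
  then have "ins_step \<Sigma> (a # y) (a # z)"
    unfolding ins_step_def by (metis append_Cons)
  with ins.IH show ?case by (rule edits.ins)
next
  case (del x i j y z)
  then have "del_step (a # y) (a # z)"
    unfolding del_step_def by (metis append_Cons)
  with del.IH show ?case by (rule edits.del)
qed

lemma edits_delete_head: "edits \<Sigma> (a # ys) 0 1 ys"
proof -
  have "del_step (a # ys) ys" unfolding del_step_def by (metis append_Nil)
  then show ?thesis using edits.del[OF edits.refl] by simp
qed

lemma edits_insert_head: "a \<in> \<Sigma> \<Longrightarrow> edits \<Sigma> ys 1 0 (a # ys)"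
proof -
  assume "a \<in> \<Sigma>"
  then have "ins_step \<Sigma> ys (a # ys)" unfolding ins_step_def by (metis append_Nil)
  then show ?thesis using edits.ins[OF edits.refl] by simp
qed

lemma edits_delete_to_subseq: "subseq w x \<Longrightarrow> edits \<Sigma> x 0 (length x - length w) w"
proof (induction rule: list_emb.induct)
  case (list_emb_Nil ys)
  show ?case
  proof (induction ys)
    case Nil
    show ?case by (simp add: edits.refl)
  next
    case (Cons a ys)
    from edits_trans[OF Cons edits_delete_head] show ?case by simp
  qed
next
  case (list_emb_Cons xs ys y)
  from edits_trans[OF list_emb_Cons.IH edits_delete_head] list_emb_length[OF list_emb_Cons.hyps]
  show ?case by (simp add: Suc_diff_le)
next
  case (list_emb_Cons2 x y xs ys)
  then show ?case using edits_Cons by fastforce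
qed

lemma edits_insert_from_subseq:
  "subseq w y \<Longrightarrow> set y \<subseteq> \<Sigma> \<Longrightarrow> edits \<Sigma> w (length y - length w) 0 y"
proof (induction rule: list_emb.induct)
  case (list_emb_Nil ys)
  then show ?case
  proof (induction ys)
    case Nil
    show ?case by (simp add: edits.refl)
  next
    case (Cons a ys)
    from edits_trans[OF edits_insert_head Cons.IH] Cons.prems show ?case by simp
  qed
next
  case (list_emb_Cons xs ys y)
  from list_emb_Cons.prems edits_trans[OF edits_insert_head list_emb_Cons.IH]
    list_emb_length[OF list_emb_Cons.hyps]
  show ?case by (simp add: Suc_diff_le)
next
  case (list_emb_Cons2 x y xs ys)
  then show ?case using edits_Cons by fastforce
qed

lemma lev_dist_le_common_subseq:
  assumes "subseq w x" "subseq w y" "set y \<subseteq> \<Sigma>"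
  shows "lev_dist \<Sigma> x y + 2 * length w \<le> length x + length y"
proof -
  have "edits \<Sigma> x (length y - length w) (length x - length w) y"
    using edits_trans[OF edits_insert_from_subseq[OF assms(2,3)] edits_delete_to_subseq[OF assms(1)]]
    by simp
  then have "lev_dist \<Sigma> x y \<le> (length x - length w) + (length y - length w)"
    unfolding lev_dist_def by (intro Least_le) (metis add.commute)
  moreover have "length w \<le> length x" "length w \<le> length y"
    using assms(1,2) by (simp_all add: list_emb_length)
  ultimately show ?thesis by linarith
qed

lemma min_lev_dist_le:
  assumes "finite C" "c \<in> C" "c' \<in> C" "c \<noteq> c'"
  shows "min_lev_dist \<Sigma> C \<le> lev_dist \<Sigma> c c'"
proof -
  have "finite {lev_dist \<Sigma> c1 c2 | c1 c2. c1 \<in> C \<and> c2 \<in> C \<and> c1 \<noteq> c2}"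
    by (rule finite_subset[of _ "case_prod (lev_dist \<Sigma>) ` (C \<times> C)"]) (auto simp: assms(1))
  then show ?thesis unfolding min_lev_dist_def by (rule Min_le) (use assms in blast)
qed

lemma subseq_del_step:
  assumes "subseq w y" "del_step y z"
  obtains w' where "subseq w' w" "subseq w' z" "length w \<le> Suc (length w')"
proof -
  obtain u a t where y: "y = u @ a # t" and z: "z = u @ t"
    using assms(2) unfolding del_step_def by blast
  obtain ws vs where w: "w = ws @ vs" "subseq ws u" "subseq vs (a # t)"
    using assms(1) y by (auto simp: subseq_append_iff)
  have "subseq (tl vs) t"
    using w(3) by (cases vs) (auto split: if_splits intro: subseq_Cons')
  moreover have "subseq (tl vs) vs" by (cases vs) auto
  ultimately show ?thesis
    using w z by (intro that[of "ws @ tl vs"]) (auto intro: list_emb_append_mono)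
qed

lemma edits_common_subseq:
  "edits \<Sigma> x i j y \<Longrightarrow> \<exists>w. subseq w x \<and> subseq w y \<and> length x \<le> length w + j"
proof (induction rule: edits.induct)
  case (refl x)
  show ?case by (intro exI[of _ x]) simp
next
  case (ins x i j y z)
  then obtain w where w: "subseq w x" "subseq w y" "length x \<le> length w + j" by blast
  from ins.hyps(2) have "subseq y z"
    unfolding ins_step_def by (auto intro: list_emb_append_mono)
  with w(2) have "subseq w z" by (rule subseq_order.order_trans)
  with w(1,3) show ?case by blast
next
  case (del x i j y z)
  then obtain w where w: "subseq w x" "subseq w y" "length x \<le> length w + j" by blast
  obtain w' where w': "subseq w' w" "subseq w' z" "length w \<le> Suc (length w')"
    using subseq_del_step[OF w(2) del.hyps(2)] .
  have "subseq w' x" using w'(1) w(1) by (rule subseq_order.order_trans)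
  moreover have "length x \<le> length w' + Suc j" using w(3) w'(3) by simp
  ultimately show ?case using w'(2) by blast
qed

lemma subseq_nths_mono: "A \<subseteq> B \<Longrightarrow> subseq (nths xs A) (nths xs B)"
proof (induction xs arbitrary: A B)
  case Nil
  show ?case by simp
next
  case (Cons x xs)
  have "subseq (nths xs {j. Suc j \<in> A}) (nths xs {j. Suc j \<in> B})"
    using Cons by (intro Cons.IH) auto
  with Cons.prems show ?case by (auto simp: nths_Cons)
qed

lemma length_nths_subset:
  assumes "S \<subseteq> {..<length xs}"
  shows "length (nths xs S) = card S"
proof -
  have "{i. i < length xs \<and> i \<in> S} = S" using assms by auto
  then show ?thesis by (simp add: length_nths)
qed

lemma subseq_positions:
  assumes "subseq w v" "k \<le> length w"
  obtains S where "S \<subseteq> {..<length v}" "card S = k" "subseq (nths v S) w"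
proof -
  obtain S0 where w: "w = nths v S0" using assms(1) by (auto simp: subseq_conv_nths)
  have "k \<le> card {i. i < length v \<and> i \<in> S0}" using assms(2) by (simp add: w length_nths)
  then obtain S where S: "S \<subseteq> {i. i < length v \<and> i \<in> S0}" "card S = k"
    by (meson obtain_subset_with_card_n)
  then have "subseq (nths v S) w" unfolding w by (intro subseq_nths_mono) auto
  with S show ?thesis by (intro that) auto
qed

lemma lev_ball_common_positions:
  assumes "c \<in> lev_ball \<Sigma> v a b"
  obtains S where "S \<subseteq> {..<length v}" "card S = length v - b" "subseq (nths v S) c"
proof -
  obtain i j where "j \<le> b" "edits \<Sigma> v i j c" using assms unfolding lev_ball_def by blast
  then obtain w where "subseq w v" "subseq w c" "length v - b \<le> length w"
    using edits_common_subseq by fastforce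
  then show ?thesis
    by (meson subseq_positions subseq_order.order_trans that)
qed

lemma lev_dist_le_common_positions:
  assumes "S \<subseteq> {..<length v}" "subseq (nths v S) x" "subseq (nths v S') y" "set y \<subseteq> \<Sigma>"
  shows "lev_dist \<Sigma> x y + 2 * card (S \<inter> S') \<le> length x + length y"
proof -
  define w where "w = nths v (S \<inter> S')"
  have "subseq w x" "subseq w y"
    unfolding w_def using assms(2,3)
    by (meson inf_le1 inf_le2 subseq_nths_mono subseq_order.order_trans)+
  moreover have "length w = card (S \<inter> S')"
    unfolding w_def using assms(1) by (intro length_nths_subset) auto
  ultimately show ?thesis using lev_dist_le_common_subseq assms(4) by metis
qed

lemma lev_ball_code_positions:
  assumes "finite C" "C \<subseteq> {x. set x \<subseteq> \<Sigma> \<and> length x = n}"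
  obtains S where
    "\<And>c. c \<in> lev_ball \<Sigma> v a b \<inter> C \<Longrightarrow> S c \<subseteq> {..<length v} \<and> card (S c) = length v - b"
    "\<And>c c'. c \<in> lev_ball \<Sigma> v a b \<inter> C \<Longrightarrow> c' \<in> lev_ball \<Sigma> v a b \<inter> C \<Longrightarrow> c \<noteq> c' \<Longrightarrow>
       min_lev_dist \<Sigma> C + 2 * card (S c \<inter> S c') \<le> 2 * n"
proof -
  have "\<exists>S. S \<subseteq> {..<length v} \<and> card S = length v - b \<and> subseq (nths v S) c"
    if "c \<in> lev_ball \<Sigma> v a b" for c
    using lev_ball_common_positions[OF that] by metis
  then obtain S where S: "\<And>c. c \<in> lev_ball \<Sigma> v a b \<Longrightarrow>
      S c \<subseteq> {..<length v} \<and> card (S c) = length v - b \<and> subseq (nths v (S c)) c"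
    by metis
  have "min_lev_dist \<Sigma> C + 2 * card (S c \<inter> S c') \<le> 2 * n"
    if "c \<in> lev_ball \<Sigma> v a b \<inter> C" "c' \<in> lev_ball \<Sigma> v a b \<inter> C" "c \<noteq> c'" for c c'
  proof -
    have "min_lev_dist \<Sigma> C \<le> lev_dist \<Sigma> c c'"
      using that by (intro min_lev_dist_le[OF assms(1)]) auto
    moreover have "lev_dist \<Sigma> c c' + 2 * card (S c \<inter> S c') \<le> length c + length c'"
      using that S assms(2) by (intro lev_dist_le_common_positions) auto
    moreover have "length c = n" "length c' = n" using that assms(2) by auto
    ultimately show ?thesis by linarith
  qed
  with S show ?thesis using that by blast
qed

text \<open>The multiplicities m(p) of the points of U satisfy \<Sum> m = \<ell> k and
  \<Sum> m^2 = \<Sum> |S(c) \<inter> S(c')| over all pairs; compare them by Cauchy-Schwarz.\<close>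
lemma second_moment_count:
  fixes S :: "'b \<Rightarrow> 'p set" and b :: real
  assumes "finite U" "finite L"
    and sets: "\<And>c. c \<in> L \<Longrightarrow> S c \<subseteq> U \<and> card (S c) = k"
    and pairs: "\<And>c c'. c \<in> L \<Longrightarrow> c' \<in> L \<Longrightarrow> c \<noteq> c' \<Longrightarrow> card (S c \<inter> S c') \<le> b"
  shows "(real (card L) * k)\<^sup>2
           \<le> card U * (real (card L) * k + real (card L) * (real (card L) - 1) * b)"
proof -
  define m where "m p = (\<Sum>c\<in>L. of_bool (p \<in> S c) :: real)" for p
  have count_inter: "(\<Sum>p\<in>U. of_bool (p \<in> S c \<and> p \<in> S c') :: real) = card (S c \<inter> S c')"
    if "c \<in> L" for c c'
  proof -
    have "U \<inter> {p. p \<in> S c \<and> p \<in> S c'} = S c \<inter> S c'" using sets[OF that] by blast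
    then show ?thesis using \<open>finite U\<close> by (simp add: sum_of_bool_eq)
  qed
  have "(\<Sum>p\<in>U. m p) = (\<Sum>c\<in>L. \<Sum>p\<in>U. of_bool (p \<in> S c))"
    unfolding m_def by (rule sum.swap)
  also have "\<dots> = (\<Sum>c\<in>L. real k)"
  proof (rule sum.cong)
    fix c assume "c \<in> L"
    then show "(\<Sum>p\<in>U. of_bool (p \<in> S c)) = real k"
      using count_inter[of c c] sets[of c] by simp
  qed simp
  also have "\<dots> = real (card L) * k" by simp
  finally have sum_m: "(\<Sum>p\<in>U. m p) = real (card L) * k" .
  have "(\<Sum>p\<in>U. (m p)\<^sup>2) = (\<Sum>p\<in>U. \<Sum>c\<in>L. \<Sum>c'\<in>L. of_bool (p \<in> S c \<and> p \<in> S c'))"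
    unfolding m_def power2_eq_square sum_product by (simp add: of_bool_conj)
  also have "\<dots> = (\<Sum>c\<in>L. \<Sum>c'\<in>L. \<Sum>p\<in>U. of_bool (p \<in> S c \<and> p \<in> S c'))"
    by (subst sum.swap) (simp only: sum.swap[of _ U])
  also have "\<dots> = (\<Sum>c\<in>L. \<Sum>c'\<in>L. real (card (S c \<inter> S c')))"
    using count_inter by simp
  also have "\<dots> \<le> (\<Sum>c\<in>L. k + (real (card L) - 1) * b)"
  proof (rule sum_mono)
    fix c assume c: "c \<in> L"
    have "(\<Sum>c'\<in>L - {c}. real (card (S c \<inter> S c'))) \<le> real (card (L - {c})) * b"
      using pairs c by (intro sum_bounded_above) auto
    moreover have "real (card (L - {c})) = real (card L) - 1"
    proof -
      have "card L > 0" using \<open>finite L\<close> c card_gt_0_iff by blast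
      then show ?thesis using \<open>finite L\<close> c by (simp add: of_nat_diff)
    qed
    ultimately show "(\<Sum>c'\<in>L. real (card (S c \<inter> S c'))) \<le> k + (real (card L) - 1) * b"
      using \<open>finite L\<close> c sets[OF c] by (simp add: sum.remove)
  qed
  finally have sum_m2: "(\<Sum>p\<in>U. (m p)\<^sup>2) \<le> real (card L) * (k + (real (card L) - 1) * b)"
    by simp
  have "(real (card L) * k)\<^sup>2 \<le> (\<Sum>p\<in>U. (m p)\<^sup>2) * card U"
    using sum_squared_le_sum_of_squares[of m U] sum_m by simp
  also have "\<dots> \<le> real (card L) * (k + (real (card L) - 1) * b) * card U"
    using sum_m2 by (simp add: mult_right_mono)
  finally show ?thesis by (simp add: algebra_simps)
qed

lemma count_le_of_second_moment:
  fixes l k t e N :: real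
  assumes N: "N = k + t" "0 < N" and margin: "t * k / N < e"
    and second_moment: "(l * k)\<^sup>2 \<le> N * (l * k + l * (l - 1) * (k - e))"
    and "0 \<le> l" "0 \<le> t" "0 \<le> k"
  shows "l \<le> N * e / (N * e - t * k)"
proof -
  have pos: "0 < N * e - t * k"
    using margin \<open>0 < N\<close> by (simp add: pos_divide_less_eq algebra_simps)
  have "l * (N * e - t * k) \<le> N * e"
  proof (cases "l = 0")
    case True
    have "0 \<le> t * k" using \<open>0 \<le> t\<close> \<open>0 \<le> k\<close> by simp
    with True pos show ?thesis by simp
  next
    case False
    with \<open>0 \<le> l\<close> have "l > 0" by simp
    have "l * (l * k\<^sup>2) \<le> l * (N * (k + (l - 1) * (k - e)))"
      using second_moment by (simp add: power2_eq_square algebra_simps)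
    with \<open>l > 0\<close> have "l * k\<^sup>2 \<le> N * (k + (l - 1) * (k - e))" by simp
    then show ?thesis by (simp add: N(1) power2_eq_square algebra_simps)
  qed
  with pos show ?thesis by (simp add: pos_le_divide_eq)
qed

theorem mainTheorem1:
  fixes \<Sigma> :: "'a set" and C :: "'a list set" and n d tI tD N :: nat and v :: "'a list"
  assumes "finite \<Sigma>"
    and "C \<subseteq> {x. set x \<subseteq> \<Sigma> \<and> length x = n}"
    and "card C \<ge> 2"
    and "d = min_lev_dist \<Sigma> C"
    and "tD \<le> n"
    and "N = n + tI - tD" and "N > 0"
    and "set v \<subseteq> \<Sigma>" and "length v = N"
    and "real d / 2 > real tD + real tI * real (n - tD) / real N"
  shows "real (card (lev_ball \<Sigma> v tD tI \<inter> C))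
           \<le> real N * (real d / 2 - real tD)
              / (real N * (real d / 2 - real tD) - real tI * real (n - tD))"
proof -
  define k where "k = n - tD"
  define L where "L = lev_ball \<Sigma> v tD tI \<inter> C"
  have "finite C" using assms(3) by (metis card.infinite not_numeral_le_zero)
  then have "finite L" by (simp add: L_def)
  have N: "N = k + tI" using assms(5,6) k_def by simp
  obtain S where S: "\<And>c. c \<in> L \<Longrightarrow> S c \<subseteq> {..<length v} \<and> card (S c) = length v - tI"
    and pairs: "\<And>c c'. c \<in> L \<Longrightarrow> c' \<in> L \<Longrightarrow> c \<noteq> c' \<Longrightarrow> d + 2 * card (S c \<inter> S c') \<le> 2 * n"
    unfolding L_def assms(4) using lev_ball_code_positions[OF \<open>finite C\<close> assms(2)] by metis
  have "(real (card L) * k)\<^sup>2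
      \<le> card {..<N} * (real (card L) * k + real (card L) * (real (card L) - 1) * (real n - real d / 2))"
  proof (rule second_moment_count[where S = S and k = k])
    fix c c' assume "c \<in> L" "c' \<in> L" "c \<noteq> c'"
    from pairs[OF this] show "card (S c \<inter> S c') \<le> real n - real d / 2" by linarith
  qed (use \<open>finite L\<close> S assms(9) N in auto)
  moreover have "real n - real d / 2 = real k - (real d / 2 - real tD)" using k_def assms(5) by simp
  ultimately have "(real (card L) * k)\<^sup>2
      \<le> N * (real (card L) * k + real (card L) * (real (card L) - 1) * (real k - (real d / 2 - tD)))"
    by (simp only: card_lessThan)
  moreover have "real tI * k / N < real d / 2 - tD" using assms(10) unfolding k_def by linarith
  ultimately show ?thesis
    using count_le_of_second_moment[where l = "card L" and k = k and t = tI] assms(7) N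
    unfolding L_def k_def by simp
qed

end
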